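(* Let $Q$ be an acyclic quiver and $W=0$ (so $\mathcal{A}=\mathrm{rep}(Q)$). Then $(Q,W)$ is genteel: the only self-stable objects of $\mathcal{A}$ are the simple representations $S_i$, $i\in V(Q)$.
   Context: $Q$ is a quiver with finite vertex set $V(Q)$; acyclic means it has no oriented cycles. $\mathcal{A}$ is the category of finite-dimensional representations of $Q$, $S_i$ the one-dimensional simple representation at vertex $i$. $N=\mathbb{Z}^{V(Q)}$ with basis $(e_i)$, $[E]\in N$ the dimension vector. The skew form $\langle-,-\rangle$ on $N$ is $\langle e_i,e_j\rangle=a_{ji}-a_{ij}$, where $a_{ij}$ is the number of arrows from $i$ to $j$; write $\langle A,B\rangle=\langle[A],[B]\rangle$. For $\theta\in\mathrm{Hom}(N,\mathbb{R})$, a nonzero object $E$ is $\theta$-stable if $\theta(E)=0$ and every proper nonzero subobject $A\subset E$ satisfies $\theta(A)<0$. An object $E$ is self-stable if it is $\theta$-stable for $\theta=\langle-,[E]\rangle$ (equivalently, $E\neq0$ and every non-trivial short exact sequence $0\to A\to E\to B\to0$ has $\langle A,B\rangle<0$). A quiver with potential is genteel if the only self-stable objects are of the form $S_i$. *)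

theory Defs
  imports Complex_Main
begin

definition quiver :: "'v set \<Rightarrow> 'a set \<Rightarrow> ('a \<Rightarrow> 'v) \<Rightarrow> ('a \<Rightarrow> 'v) \<Rightarrow> bool" where
  "quiver V Ar s t \<longleftrightarrow> finite V \<and> finite Ar \<and> (\<forall>a\<in>Ar. s a \<in> V \<and> t a \<in> V)"

definition quiver_acyclic :: "'a set \<Rightarrow> ('a \<Rightarrow> 'v) \<Rightarrow> ('a \<Rightarrow> 'v) \<Rightarrow> bool" where
  "quiver_acyclic Ar s t \<longleftrightarrow> acyclic {(s a, t a) | a. a \<in> Ar}"

definition n_arrows :: "'a set \<Rightarrow> ('a \<Rightarrow> 'v) \<Rightarrow> ('a \<Rightarrow> 'v) \<Rightarrow> 'v \<Rightarrow> 'v \<Rightarrow> int" where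
  "n_arrows Ar s t i j = int (card {a\<in>Ar. s a = i \<and> t a = j})"

definition skew_form :: "'v set \<Rightarrow> 'a set \<Rightarrow> ('a \<Rightarrow> 'v) \<Rightarrow> ('a \<Rightarrow> 'v) \<Rightarrow>
    ('v \<Rightarrow> int) \<Rightarrow> ('v \<Rightarrow> int) \<Rightarrow> int" where
  "skew_form V Ar s t x y =
     (\<Sum>i\<in>V. \<Sum>j\<in>V. x i * y j * (n_arrows Ar s t j i - n_arrows Ar s t i j))"

text \<open>A finite-dimensional representation of the quiver over a field 'k, realised inside an
  ambient k-vector space 'e (with scalar multiplication scale): a finite-dimensional subspace
  X i for every vertex i and, for every arrow a, a linear map f a sending X (s a) into X (t a)
  (only its restriction to X (s a) is relevant).\<close>
definition fin_dim_subspace :: "('k::field \<Rightarrow> 'e::ab_group_add \<Rightarrow> 'e) \<Rightarrow> 'e set \<Rightarrow> bool" where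
  "fin_dim_subspace scale U \<longleftrightarrow>
     module.subspace scale U \<and> (\<exists>B. finite B \<and> B \<subseteq> U \<and> module.span scale B = U)"

definition quiver_rep :: "('k::field \<Rightarrow> 'e::ab_group_add \<Rightarrow> 'e) \<Rightarrow> 'v set \<Rightarrow> 'a set \<Rightarrow>
    ('a \<Rightarrow> 'v) \<Rightarrow> ('a \<Rightarrow> 'v) \<Rightarrow> ('v \<Rightarrow> 'e set) \<Rightarrow> ('a \<Rightarrow> 'e \<Rightarrow> 'e) \<Rightarrow> bool" where
  "quiver_rep scale V Ar s t X f \<longleftrightarrow>
     (\<forall>i\<in>V. fin_dim_subspace scale (X i)) \<and>
     (\<forall>a\<in>Ar. Vector_Spaces.linear scale scale (f a) \<and> f a ` X (s a) \<subseteq> X (t a))"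

definition dim_vec :: "('k::field \<Rightarrow> 'e::ab_group_add \<Rightarrow> 'e) \<Rightarrow> 'v set \<Rightarrow> ('v \<Rightarrow> 'e set) \<Rightarrow> 'v \<Rightarrow> int" where
  "dim_vec scale V X i = (if i \<in> V then int (vector_space.dim scale (X i)) else 0)"

definition subrep :: "('k::field \<Rightarrow> 'e::ab_group_add \<Rightarrow> 'e) \<Rightarrow> 'v set \<Rightarrow> 'a set \<Rightarrow>
    ('a \<Rightarrow> 'v) \<Rightarrow> ('a \<Rightarrow> 'v) \<Rightarrow> ('v \<Rightarrow> 'e set) \<Rightarrow> ('a \<Rightarrow> 'e \<Rightarrow> 'e) \<Rightarrow> ('v \<Rightarrow> 'e set) \<Rightarrow> bool" where
  "subrep scale V Ar s t X f U \<longleftrightarrow>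
     (\<forall>i\<in>V. module.subspace scale (U i) \<and> U i \<subseteq> X i) \<and>
     (\<forall>a\<in>Ar. f a ` U (s a) \<subseteq> U (t a))"

definition rep_nonzero :: "'v set \<Rightarrow> ('v \<Rightarrow> 'e::zero set) \<Rightarrow> bool" where
  "rep_nonzero V X \<longleftrightarrow> (\<exists>i\<in>V. X i \<noteq> {0})"

definition theta_stable :: "('k::field \<Rightarrow> 'e::ab_group_add \<Rightarrow> 'e) \<Rightarrow> 'v set \<Rightarrow> 'a set \<Rightarrow>
    ('a \<Rightarrow> 'v) \<Rightarrow> ('a \<Rightarrow> 'v) \<Rightarrow> (('v \<Rightarrow> int) \<Rightarrow> real) \<Rightarrow> ('v \<Rightarrow> 'e set) \<Rightarrow> ('a \<Rightarrow> 'e \<Rightarrow> 'e) \<Rightarrow> bool" where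
  "theta_stable scale V Ar s t \<theta> X f \<longleftrightarrow>
     rep_nonzero V X \<and> \<theta> (dim_vec scale V X) = 0 \<and>
     (\<forall>U. subrep scale V Ar s t X f U \<and> rep_nonzero V U \<and> (\<exists>i\<in>V. U i \<noteq> X i)
          \<longrightarrow> \<theta> (dim_vec scale V U) < 0)"

definition self_stable :: "('k::field \<Rightarrow> 'e::ab_group_add \<Rightarrow> 'e) \<Rightarrow> 'v set \<Rightarrow> 'a set \<Rightarrow>
    ('a \<Rightarrow> 'v) \<Rightarrow> ('a \<Rightarrow> 'v) \<Rightarrow> ('v \<Rightarrow> 'e set) \<Rightarrow> ('a \<Rightarrow> 'e \<Rightarrow> 'e) \<Rightarrow> bool" where
  "self_stable scale V Ar s t X f \<longleftrightarrow>
     theta_stable scale V Ar s t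
       (\<lambda>x. real_of_int (skew_form V Ar s t x (dim_vec scale V X))) X f"

definition iso_simple :: "('k::field \<Rightarrow> 'e::ab_group_add \<Rightarrow> 'e) \<Rightarrow> 'v set \<Rightarrow> 'a set \<Rightarrow>
    ('a \<Rightarrow> 'v) \<Rightarrow> ('a \<Rightarrow> 'v) \<Rightarrow> ('v \<Rightarrow> 'e set) \<Rightarrow> ('a \<Rightarrow> 'e \<Rightarrow> 'e) \<Rightarrow> 'v \<Rightarrow> bool" where
  "iso_simple scale V Ar s t X f i \<longleftrightarrow>
     vector_space.dim scale (X i) = 1 \<and> (\<forall>j\<in>V. j \<noteq> i \<longrightarrow> X j = {0}) \<and>
     (\<forall>a\<in>Ar. \<forall>x\<in>X (s a). f a x = 0)"

end

theory Submission
  imports Defs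
begin

text \<open>Since the quiver is acyclic, the support of a nonzero representation X has a vertex i
  from which no arrow leads into the support. Every subspace W of X i, placed at i
  with zeros elsewhere, is then a subrepresentation, and its slope is
  dim W \<cdot> \<Sum>j a_ji dim X j \<ge> 0. Self-stability forbids this for proper subobjects, so
  X is concentrated at i, and taking W to be a line shows dim X i = 1.\<close>

definition concentrated_at :: "'v \<Rightarrow> 'e::zero set \<Rightarrow> 'v \<Rightarrow> 'e set" where
  "concentrated_at i W = (\<lambda>j. if j = i then W else {0})"

lemma finite_acyclic_obtain_sink:
  assumes "finite R" "acyclic R" "x \<in> S"
  obtains i where "i \<in> S" "\<forall>j\<in>S. (i, j) \<notin> R"
proof -
  have "wf (R\<inverse>)" using assms(1,2) by (rule finite_acyclic_wf_converse)
  then obtain i where "i \<in> S" "\<forall>j. (j, i) \<in> R\<inverse> \<longrightarrow> j \<notin> S"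
    using assms(3) wfE_min' by (metis empty_iff)
  then show thesis using that by auto
qed

lemma quiver_rep_obtain_sink_of_support:
  assumes "quiver V Ar s t" "quiver_acyclic Ar s t" "rep_nonzero V X"
  obtains i where "i \<in> V" "X i \<noteq> {0}" "\<forall>a\<in>Ar. s a = i \<longrightarrow> X (t a) = {0}"
proof -
  define R where "R = {(s a, t a) | a. a \<in> Ar}"
  have "finite R"
  proof -
    have "R = (\<lambda>a. (s a, t a)) ` Ar" unfolding R_def by auto
    then show ?thesis using assms(1) by (simp add: quiver_def)
  qed
  moreover have "acyclic R" using assms(2) by (simp add: quiver_acyclic_def R_def)
  moreover obtain x where "x \<in> {j\<in>V. X j \<noteq> {0}}"
    using assms(3) by (auto simp: rep_nonzero_def)
  ultimately obtain i where i: "i \<in> V" "X i \<noteq> {0}"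
    and sink: "\<forall>j\<in>{j\<in>V. X j \<noteq> {0}}. (i, j) \<notin> R"
    by (rule finite_acyclic_obtain_sink) auto
  have "X (t a) = {0}" if "a \<in> Ar" "s a = i" for a
    using sink that assms(1) unfolding R_def quiver_def by blast
  then show thesis using that i by blast
qed

lemma skew_form_single_left:
  assumes "finite V" "i \<in> V"
  shows "skew_form V Ar s t (\<lambda>k. if k = i then m else 0) y
    = m * (\<Sum>j\<in>V. y j * (n_arrows Ar s t j i - n_arrows Ar s t i j))"
proof -
  have "skew_form V Ar s t (\<lambda>k. if k = i then m else 0) y
      = (\<Sum>k\<in>V. if k = i then (\<Sum>j\<in>V. m * y j * (n_arrows Ar s t j i - n_arrows Ar s t i j)) else 0)"
    unfolding skew_form_def by (intro sum.cong) auto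
  also have "\<dots> = m * (\<Sum>j\<in>V. y j * (n_arrows Ar s t j i - n_arrows Ar s t i j))"
    using assms by (simp add: sum_distrib_left mult.assoc)
  finally show ?thesis .
qed

lemma skew_form_single_left_nonneg:
  assumes "finite V" "i \<in> V" "m \<ge> 0" "\<forall>j\<in>V. y j \<ge> 0"
    and no_arrow_into_support: "\<forall>a\<in>Ar. s a = i \<longrightarrow> y (t a) = 0"
  shows "skew_form V Ar s t (\<lambda>k. if k = i then m else 0) y \<ge> 0"
proof -
  have out_zero: "y j * n_arrows Ar s t i j = 0" for j
  proof (cases "y j = 0")
    case False
    then have "{a\<in>Ar. s a = i \<and> t a = j} = {}" using no_arrow_into_support by auto
    then have "n_arrows Ar s t i j = 0" unfolding n_arrows_def by (metis card.empty of_nat_0)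
    then show ?thesis by simp
  qed simp
  then have "(\<Sum>j\<in>V. y j * (n_arrows Ar s t j i - n_arrows Ar s t i j))
      = (\<Sum>j\<in>V. y j * n_arrows Ar s t j i)"
    by (intro sum.cong refl) (simp only: right_diff_distrib out_zero diff_zero)
  also have "\<dots> \<ge> 0"
    using assms(4) by (intro sum_nonneg) (simp add: n_arrows_def)
  finally show ?thesis using assms(1-3) by (simp add: skew_form_single_left)
qed

context vector_space
begin

lemma dim_zero_space [simp]: "dim {0} = 0"
  using dim_le_card[of "{0}" "{}"] by simp

lemma quiver_rep_map_zero: "quiver_rep scale V Ar s t X f \<Longrightarrow> a \<in> Ar \<Longrightarrow> f a 0 = 0"
  unfolding quiver_rep_def by (metis module_hom.zero module_hom_iff_linear)

lemma dim_vec_concentrated_at: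
  "i \<in> V \<Longrightarrow> dim_vec scale V (concentrated_at i W) = (\<lambda>k. if k = i then int (dim W) else 0)"
  by (auto simp: dim_vec_def concentrated_at_def)

lemma subrep_concentrated_at:
  assumes rep: "quiver_rep scale V Ar s t X f"
    and sink: "\<forall>a\<in>Ar. s a = i \<longrightarrow> X (t a) = {0}"
    and W: "subspace W" "W \<subseteq> X i"
  shows "subrep scale V Ar s t X f (concentrated_at i W)"
  unfolding subrep_def
proof (intro conjI ballI)
  fix j assume "j \<in> V"
  then have "0 \<in> X j" using rep subspace_0 by (simp add: quiver_rep_def fin_dim_subspace_def)
  then show "subspace (concentrated_at i W j)" "concentrated_at i W j \<subseteq> X j"
    using W by (simp_all add: concentrated_at_def)
next
  fix a assume a: "a \<in> Ar"
  have "0 \<in> concentrated_at i W (t a)" using W(1) subspace_0 by (simp add: concentrated_at_def)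
  moreover have "f a ` concentrated_at i W (s a) \<subseteq> {0}"
  proof (cases "s a = i")
    case True
    have "f a ` W \<subseteq> f a ` X (s a)" using True W(2) by (simp add: image_mono)
    also have "\<dots> \<subseteq> X (t a)" using rep a by (simp add: quiver_rep_def)
    also have "\<dots> = {0}" using a sink True by simp
    finally show ?thesis using True by (simp add: concentrated_at_def)
  next
    case False
    then show ?thesis using quiver_rep_map_zero[OF rep a] by (simp add: concentrated_at_def)
  qed
  ultimately show "f a ` concentrated_at i W (s a) \<subseteq> concentrated_at i W (t a)"
    by (meson empty_subsetI insert_subset order_trans)
qed

lemma quiver_rep_maps_zero_at_sink:
  assumes "quiver V Ar s t" "quiver_rep scale V Ar s t X f"
    and "\<forall>j\<in>V. j \<noteq> i \<longrightarrow> X j = {0}" "\<forall>a\<in>Ar. s a = i \<longrightarrow> X (t a) = {0}"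
  shows "\<forall>a\<in>Ar. \<forall>y\<in>X (s a). f a y = 0"
proof (intro ballI)
  fix a y assume a: "a \<in> Ar" and y: "y \<in> X (s a)"
  show "f a y = 0"
  proof (cases "s a = i")
    case True
    then show ?thesis using a y assms(2,4) by (force simp: quiver_rep_def)
  next
    case False
    then have "y = 0" using a y assms(1,3) by (auto simp: quiver_def)
    then show ?thesis using quiver_rep_map_zero[OF assms(2) a] by simp
  qed
qed

lemma self_stable_concentrated_at_not_proper:
  assumes "self_stable scale V Ar s t X f" "i \<in> V" "W \<noteq> {0}"
    and "subrep scale V Ar s t X f (concentrated_at i W)"
    and "skew_form V Ar s t (dim_vec scale V (concentrated_at i W)) (dim_vec scale V X) \<ge> 0"
  shows "\<forall>j\<in>V. concentrated_at i W j = X j"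
proof -
  have stable: "\<forall>U. subrep scale V Ar s t X f U \<and> rep_nonzero V U \<and> (\<exists>j\<in>V. U j \<noteq> X j)
      \<longrightarrow> real_of_int (skew_form V Ar s t (dim_vec scale V U) (dim_vec scale V X)) < 0"
    using assms(1) unfolding self_stable_def theta_stable_def by (elim conjE)
  have nonzero: "rep_nonzero V (concentrated_at i W)"
    using assms(2,3) by (auto simp: rep_nonzero_def concentrated_at_def)
  show ?thesis
  proof (rule ccontr)
    assume "\<not> ?thesis"
    then have "\<exists>j\<in>V. concentrated_at i W j \<noteq> X j" by blast
    then have "real_of_int (skew_form V Ar s t (dim_vec scale V (concentrated_at i W))
        (dim_vec scale V X)) < 0"
      using stable assms(4) nonzero by blast
    then show False using assms(5) by linarith
  qed
qed

end

theorem mainTheorem14: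
  fixes scale :: "'k::field \<Rightarrow> 'e::ab_group_add \<Rightarrow> 'e"
    and V :: "'v set" and Ar :: "'a set" and s t :: "'a \<Rightarrow> 'v"
    and X :: "'v \<Rightarrow> 'e set" and f :: "'a \<Rightarrow> 'e \<Rightarrow> 'e"
  assumes "vector_space scale"
    and "quiver V Ar s t"
    and "quiver_acyclic Ar s t"
    and "quiver_rep scale V Ar s t X f"
    and "self_stable scale V Ar s t X f"
  shows "\<exists>i\<in>V. iso_simple scale V Ar s t X f i"
proof -
  interpret vector_space scale by fact
  have "rep_nonzero V X" using assms(5) by (simp add: self_stable_def theta_stable_def)
  then obtain i where i: "i \<in> V" "X i \<noteq> {0}"
    and sink: "\<forall>a\<in>Ar. s a = i \<longrightarrow> X (t a) = {0}"
    using quiver_rep_obtain_sink_of_support[OF assms(2,3)] by blast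
  have Xi: "subspace (X i)" using assms(4) i(1) by (simp add: quiver_rep_def fin_dim_subspace_def)
  have fills_X: "\<forall>j\<in>V. concentrated_at i W j = X j"
    if "subspace W" "W \<subseteq> X i" "W \<noteq> {0}" for W
  proof (rule self_stable_concentrated_at_not_proper)
    show "subrep scale V Ar s t X f (concentrated_at i W)"
      using assms(4) sink that(1,2) by (rule subrep_concentrated_at)
    show "skew_form V Ar s t (dim_vec scale V (concentrated_at i W)) (dim_vec scale V X) \<ge> 0"
      unfolding dim_vec_concentrated_at[OF i(1)] using assms(2) i(1) sink
      by (intro skew_form_single_left_nonneg) (auto simp: quiver_def dim_vec_def)
  qed (use assms(5) i that in auto)
  have X_out: "X j = {0}" if "j \<in> V" "j \<noteq> i" for j
  proof -
    have "concentrated_at i (X i) j = X j" using fills_X[OF Xi order_refl i(2)] that(1) by blast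
    then show ?thesis using that(2) by (simp add: concentrated_at_def)
  qed
  obtain x where x: "x \<in> X i" "x \<noteq> 0" using i(2) Xi subspace_0 by blast
  have "span {x} = X i"
    using fills_X[of "span {x}"] x Xi i(1) span_minimal[of "{x}" "X i"] span_base[of x "{x}"]
    by (force simp: concentrated_at_def)
  then have "dim (X i) = 1" using x(2) dim_span_eq_card_independent[of "{x}"] by simp
  moreover have "\<forall>a\<in>Ar. \<forall>y\<in>X (s a). f a y = 0"
    using assms(2,4) X_out sink by (intro quiver_rep_maps_zero_at_sink) blast+
  ultimately show ?thesis using i(1) X_out by (auto simp: iso_simple_def)
qed

end
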